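(* Let $G$ be a Hausdorff compact topological monoid with neutral element $e$, and let $f:G\to G$ be a continuous mapping such that for each $x,y\in G$ and each neighbourhood $V$ of $e$ there exist $z\in G$ and $n\in\mathbb{N}$ with $f^n(x),f^n(y)\in zV$. Then $f$ has a unique fixed point.
   Context: A topological monoid is a semigroup with neutral element, equipped with a topology making multiplication jointly continuous. $zV=\{zv:v\in V\}$; $f^n$ is the $n$-fold iterate of $f$. *)

theory Defs
  imports "HOL-Analysis.Analysis"
begin

end

theory Submission
  imports Defs
begin

(* Compactness gives a "Lebesgue number" for the monoid: if a closed set C of pairs misses
   the diagonal, then some neighbourhood V of 1 is so small that no translate zV contains a
   pair from C.  Without a fixed point, take C the graph of f and the pair (x, f x): its n-th
   iterate (f^n x, f(f^n x)) always lies in C.  For two distinct fixed points x, y take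
   C = {(x, y)}: the iterates of (x, y) never move. *)

lemma mult_open_nhds_one:
  fixes p :: "'a::topological_monoid_mult"
  assumes "open A" "p \<in> A"
  obtains P Q where "open P" "p \<in> P" "open Q" "1 \<in> Q"
    "\<And>w v. w \<in> P \<Longrightarrow> v \<in> Q \<Longrightarrow> w * v \<in> A"
proof -
  have "continuous_on UNIV (\<lambda>u::'a \<times> 'a. fst u * snd u)"
    by (intro continuous_intros)
  then have "open ((\<lambda>u. fst u * snd u) -` A)"
    using \<open>open A\<close> by (simp add: continuous_on_open_vimage)
  moreover have "(p, 1) \<in> (\<lambda>u. fst u * snd u) -` A"
    using \<open>p \<in> A\<close> by simp
  ultimately obtain P Q
    where "open P" "open Q" "(p, 1) \<in> P \<times> Q" "P \<times> Q \<subseteq> (\<lambda>u. fst u * snd u) -` A"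
    by (rule open_prod_elim)
  then show thesis
    by (intro that[of P Q]) auto
qed

lemma compact_monoid_translates_avoid_closed:
  fixes C :: "('a::topological_monoid_mult \<times> 'a) set"
  assumes "compact (UNIV :: 'a set)" and "closed C" and "\<And>x. (x, x) \<notin> C"
  obtains V where "open V" "1 \<in> V" "\<And>z. ((*) z ` V \<times> (*) z ` V) \<inter> C = {}"
proof -
  define small where "small p P Q \<longleftrightarrow> open P \<and> p \<in> P \<and> open Q \<and> 1 \<in> Q \<and>
    (\<forall>w\<in>P. \<forall>v\<in>Q. \<forall>v'\<in>Q. (w * v, w * v') \<notin> C)" for p P Q
  have "\<exists>P Q. small p P Q" for p
  proof -
    obtain A B where AB: "open A" "open B" "(p, p) \<in> A \<times> B" "A \<times> B \<subseteq> - C"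
      using open_prod_elim[of "- C" "(p, p)"] assms(2,3) by blast
    obtain P Q where PQ: "open P" "p \<in> P" "open Q" "1 \<in> Q"
      "\<And>w v. w \<in> P \<Longrightarrow> v \<in> Q \<Longrightarrow> w * v \<in> A \<inter> B"
      using mult_open_nhds_one[of "A \<inter> B" p] AB by blast
    have "(w * v, w * v') \<notin> C" if "w \<in> P" "v \<in> Q" "v' \<in> Q" for w v v'
      using PQ(5) that AB(4) by blast
    with PQ(1-4) have "small p P Q"
      unfolding small_def by simp
    then show ?thesis
      by blast
  qed
  then obtain P Q where "small p (P p) (Q p)" for p
    by metis
  then have PQ: "\<And>p. open (P p)" "\<And>p. p \<in> P p" "\<And>p. open (Q p)" "\<And>p. 1 \<in> Q p"
    "\<And>p w v v'. w \<in> P p \<Longrightarrow> v \<in> Q p \<Longrightarrow> v' \<in> Q p \<Longrightarrow> (w * v, w * v') \<notin> C"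
    unfolding small_def by blast+
  obtain T where T: "finite T" "UNIV \<subseteq> (\<Union>c\<in>T. P c)"
  proof (rule compactE_image[OF assms(1), of UNIV P])
    show "UNIV \<subseteq> (\<Union>c\<in>UNIV. P c)"
      using PQ(2) by blast
  qed (use PQ(1) in simp_all)
  show thesis
  proof
    show "open (\<Inter>c\<in>T. Q c)" "1 \<in> (\<Inter>c\<in>T. Q c)"
      using T(1) PQ(3,4) by (simp_all add: open_INT)
    fix z
    obtain c where c: "c \<in> T" "z \<in> P c"
      using T(2) by blast
    have "(a, b) \<notin> C" if ab: "a \<in> (*) z ` (\<Inter>c\<in>T. Q c)" "b \<in> (*) z ` (\<Inter>c\<in>T. Q c)" for a b
    proof -
      obtain v v' where "v \<in> Q c" "v' \<in> Q c" "a = z * v" "b = z * v'"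
        using ab c(1) by blast
      then show ?thesis
        using PQ(5)[OF c(2)] by simp
    qed
    then show "((*) z ` (\<Inter>c\<in>T. Q c) \<times> (*) z ` (\<Inter>c\<in>T. Q c)) \<inter> C = {}"
      by blast
  qed
qed

lemma iterates_leave_closed:
  fixes f :: "'a::topological_monoid_mult \<Rightarrow> 'a" and C :: "('a \<times> 'a) set"
  assumes "compact (UNIV :: 'a set)" and "closed C" and "\<And>x. (x, x) \<notin> C"
    and "\<And>x y V. open V \<Longrightarrow> (1::'a) \<in> V \<Longrightarrow>
           \<exists>z n. (f ^^ n) x \<in> (\<lambda>v. z * v) ` V \<and> (f ^^ n) y \<in> (\<lambda>v. z * v) ` V"
  shows "\<exists>n. ((f ^^ n) x, (f ^^ n) y) \<notin> C"
proof -
  obtain V where V: "open V" "1 \<in> V" "\<And>z. ((*) z ` V \<times> (*) z ` V) \<inter> C = {}"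
    using compact_monoid_translates_avoid_closed[OF assms(1-3)] by metis
  obtain z n where "(f ^^ n) x \<in> (*) z ` V" "(f ^^ n) y \<in> (*) z ` V"
    using assms(4)[OF V(1,2), of x y] by blast
  then have "((f ^^ n) x, (f ^^ n) y) \<in> (*) z ` V \<times> (*) z ` V"
    by simp
  then show ?thesis
    using V(3)[of z] by blast
qed

lemma closed_graph_of_continuous:
  fixes f :: "'a::topological_space \<Rightarrow> 'b::t2_space"
  assumes "continuous_on UNIV f"
  shows "closed {u. f (fst u) = snd u}"
proof -
  have "continuous_on UNIV (\<lambda>u::'a \<times> 'b. f (fst u))"
    by (rule continuous_on_compose2[OF assms continuous_on_fst[OF continuous_on_id]]) simp
  then show ?thesis
    by (intro closed_Collect_eq continuous_on_snd continuous_on_id)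
qed

theorem theorem14:
  fixes f :: "'a :: {topological_monoid_mult, t2_space} \<Rightarrow> 'a"
  assumes "compact (UNIV :: 'a set)"
    and "continuous_on UNIV f"
    and "\<And>x y V. open V \<Longrightarrow> (1::'a) \<in> V \<Longrightarrow>
           \<exists>z n. (f ^^ n) x \<in> (\<lambda>v. z * v) ` V \<and> (f ^^ n) y \<in> (\<lambda>v. z * v) ` V"
  shows "\<exists>!x. f x = x"
proof (rule ex_ex1I)
  show "\<exists>x. f x = x"
  proof (rule ccontr)
    assume no_fixpoint: "\<nexists>x. f x = x"
    have graph_off_diagonal: "(x, x) \<notin> {u. f (fst u) = snd u}" for x
      using no_fixpoint by simp
    fix x
    obtain n where "((f ^^ n) x, (f ^^ n) (f x)) \<notin> {u. f (fst u) = snd u}"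
      using iterates_leave_closed[OF assms(1) closed_graph_of_continuous[OF assms(2)]
          graph_off_diagonal assms(3)]
      by blast
    then show False
      by (simp add: funpow_swap1)
  qed
next
  fix x y assume "f x = x" "f y = y"
  then have fixed: "(f ^^ n) x = x" "(f ^^ n) y = y" for n
    by (induction n) simp_all
  show "x = y"
  proof (rule ccontr)
    assume "x \<noteq> y"
    then have "(z, z) \<notin> {(x, y)}" for z
      by blast
    then obtain n where "((f ^^ n) x, (f ^^ n) y) \<notin> {(x, y)}"
      using iterates_leave_closed[OF assms(1) closed_singleton _ assms(3)] by blast
    with fixed show False
      by simp
  qed
qed

end
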